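(* Let $k\geq0$, $q\geq1$, $m\ge1$ and $\gamma=(\gamma_1,\ldots,\gamma_m)\in\mathbb{Z}^m$ with $\gamma_1\ge 2$ and $2\le\gamma_{i+1}\le\gamma_i+1$ for all $1\le i<m$. Then \[F^{1234}(k,q,\gamma)=\begin{cases} s^k & m=1,\\ F^{2143}(k,q,\gamma) & q=1,\\ F^{1234}(k,q{-}1,\gamma)+F^{1234}(\gamma_1{+}1{-}\gamma_2{+}k,q,\gamma') & m\geq2,\ q\geq2. \end{cases}\]
   Context: For $\pi\in\{1234,2143\}$ define successor functions on integer triples. $\mathrm{suc}^{2143}(x,y,z)=\emptyset$ if $z\le0$ and for $z\ge1$, $\mathrm{suc}^{2143}(x,y,z)=\{(2,y{+}1,z),\ldots,(x{+}1,y{+}1,z)\}\cup\{(x,x{+}1,z),\ldots,(x,y,z)\}\cup\mathrm{suc}^{2143}(x,x,z{-}1)$. $\mathrm{suc}^{1234}(x,y,1)=\{(2,y{+}1,1),\ldots,(x{+}1,y{+}1,1)\}\cup\{(x,x{+}1,1),\ldots,(x,y,1)\}$ and for $z\ge2$, $\mathrm{suc}^{1234}(x,y,z)=\{(2,y{+}1,z),\ldots,(x{+}1,y{+}1,z)\}\cup\mathrm{suc}^{1234}(x,y,z{-}1)$ (sets of the form $\{(x,x{+}1,\cdot),\ldots,(x,y,\cdot)\}$ are empty if $y\le x$). A path in $\mathcal{P}^{\pi}$ is a finite sequence $P=(v_1,\ldots,v_r)$, $r\ge1$, of points of $\mathbb{Z}^3$ with $v_1=(x,y,z)$, $2\le x\le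 y$, $z\ge1$, and $v_{i+1}\in\mathrm{suc}^{\pi}(v_i)$; its length is $\ell(P)=r$. For $P\in\mathcal{P}^{2143}$, an edge from $(x_1,y_1,z_1)$ to $(x_2,y_2,z_2)$ is recorded if either $z_1=z_2$ and $y_2=y_1+1$, or $z_1>z_2$. For $P\in\mathcal{P}^{1234}$, such an edge is recorded if $y_2=y_1+1$. The signature of $P$ is the tuple of the $x$-coordinate of $v_1$ followed by the $x$-coordinates of the endpoints of the recorded edges, in order. For $k\ge0$, $q\ge1$, $\gamma\in\mathbb{Z}^m$, $m\ge1$, $\mathcal{P}^{\pi}_{k,q,\gamma}$ is the set of paths in $\mathcal{P}^{\pi}$ starting at $(\gamma_1,\gamma_1+k,q)$ with signature $\gamma$, and $F^{\pi}(k,q,\gamma)=\sum_{P\in\mathcal{P}^{\pi}_{k,q,\gamma}}t^{\ell(P)-m}$ (formal power series in $t$), with the convention $F^{\pi}(k,q,\gamma)=0$ if $q\le0$ or $\gamma$ is empty. Write $s=1/(1-t)$ and $\gamma'=(\gamma_2,\ldots,\gamma_m)$ (empty if $m=1$). *)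

theory Defs
  imports "HOL-Computational_Algebra.Formal_Power_Series"
begin

type_synonym pt = "int \<times> int \<times> int"

definition xc :: "pt \<Rightarrow> int" where "xc v = fst v"
definition yc :: "pt \<Rightarrow> int" where "yc v = fst (snd v)"
definition zc :: "pt \<Rightarrow> int" where "zc v = snd (snd v)"

function suc2143 :: "int \<Rightarrow> int \<Rightarrow> int \<Rightarrow> pt set" where
  "suc2143 x y z =
     (if z \<le> 0 then {}
      else {(a, y + 1, z) | a. 2 \<le> a \<and> a \<le> x + 1}
         \<union> {(x, b, z) | b. x + 1 \<le> b \<and> b \<le> y}
         \<union> suc2143 x x (z - 1))"
  by pat_completeness auto
termination by (relation "measure (\<lambda>(x, y, z). nat z)") auto

text \<open>Successor function for pi = 1234 (recursion on z down to level 1;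
  levels z <= 0 are never reached by paths and are set to empty).\<close>
function suc1234 :: "int \<Rightarrow> int \<Rightarrow> int \<Rightarrow> pt set" where
  "suc1234 x y z =
     (if z \<le> 0 then {}
      else if z = 1 then
        {(a, y + 1, 1) | a. 2 \<le> a \<and> a \<le> x + 1}
        \<union> {(x, b, 1) | b. x + 1 \<le> b \<and> b \<le> y}
      else {(a, y + 1, z) | a. 2 \<le> a \<and> a \<le> x + 1} \<union> suc1234 x y (z - 1))"
  by pat_completeness auto
termination by (relation "measure (\<lambda>(x, y, z). nat z)") auto

definition sucP :: "(int \<Rightarrow> int \<Rightarrow> int \<Rightarrow> pt set) \<Rightarrow> pt \<Rightarrow> pt set" where
  "sucP S v = S (xc v) (yc v) (zc v)"

definition rec2143 :: "pt \<Rightarrow> pt \<Rightarrow> bool" where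
  "rec2143 u v \<longleftrightarrow> (zc u = zc v \<and> yc v = yc u + 1) \<or> zc u > zc v"

definition rec1234 :: "pt \<Rightarrow> pt \<Rightarrow> bool" where
  "rec1234 u v \<longleftrightarrow> yc v = yc u + 1"

definition is_path :: "(int \<Rightarrow> int \<Rightarrow> int \<Rightarrow> pt set) \<Rightarrow> pt list \<Rightarrow> bool" where
  "is_path S P \<longleftrightarrow> P \<noteq> [] \<and> 2 \<le> xc (hd P) \<and> xc (hd P) \<le> yc (hd P) \<and> 1 \<le> zc (hd P)
     \<and> (\<forall>i. Suc i < length P \<longrightarrow> P ! Suc i \<in> sucP S (P ! i))"

definition signature :: "(pt \<Rightarrow> pt \<Rightarrow> bool) \<Rightarrow> pt list \<Rightarrow> int list" where
  "signature R P = xc (hd P) # map (\<lambda>(u, v). xc v) (filter (\<lambda>(u, v). R u v) (zip P (tl P)))"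

definition paths_kqg :: "(int \<Rightarrow> int \<Rightarrow> int \<Rightarrow> pt set) \<Rightarrow> (pt \<Rightarrow> pt \<Rightarrow> bool)
    \<Rightarrow> int \<Rightarrow> int \<Rightarrow> int list \<Rightarrow> pt list set" where
  "paths_kqg S R k q \<gamma> = {P. is_path S P \<and> hd P = (hd \<gamma>, hd \<gamma> + k, q) \<and> signature R P = \<gamma>}"

text \<open>Generating function sum over paths of t^(l(P) - m), as a formal power series;
  zero if q <= 0 or gamma empty.\<close>
definition Fgen :: "(int \<Rightarrow> int \<Rightarrow> int \<Rightarrow> pt set) \<Rightarrow> (pt \<Rightarrow> pt \<Rightarrow> bool)
    \<Rightarrow> int \<Rightarrow> int \<Rightarrow> int list \<Rightarrow> rat fps" where
  "Fgen S R k q \<gamma> =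
     (if q \<le> 0 \<or> \<gamma> = [] then 0
      else Abs_fps (\<lambda>n. of_nat (card {P \<in> paths_kqg S R k q \<gamma>. length P = n + length \<gamma>})))"

definition F1234 :: "int \<Rightarrow> int \<Rightarrow> int list \<Rightarrow> rat fps" where
  "F1234 = Fgen suc1234 rec1234"

definition F2143 :: "int \<Rightarrow> int \<Rightarrow> int list \<Rightarrow> rat fps" where
  "F2143 = Fgen suc2143 rec2143"

definition s_ser :: "rat fps" where
  "s_ser = inverse (1 - fps_X)"

end

(* A path is its start (\<gamma>\<^sub>1, \<gamma>\<^sub>1 + k, q) followed by a walk whose recorded steps spell \<gamma>'.
   At level 1 the successor sets and the recorded edges of the two patterns coincide, which gives
   the case q = 1.  A 1234-walk without recorded steps stays at level 1 with fixed x and weakly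
   decreasing y in (x, x + k]; splitting on whether the first y equals x + k shows that these
   walks are counted by the coefficients of s^k, as s^(k+1) = s^k + t s^(k+1).
   For q \<ge> 2 the first step either stays below level q -- these are exactly the paths starting
   one level lower, as the signature sees the start only through its y-coordinate -- or it is a
   recorded step into the top layer, which the signature forces to be (\<gamma>\<^sub>2, \<gamma>\<^sub>1 + k + 1, q),
   the start of a path for (\<gamma>\<^sub>1 + 1 - \<gamma>\<^sub>2 + k, q, \<gamma>'). *)

theory Submission
  imports Defs
begin

lemma coords_Pair [simp]: "xc (x, y, z) = x" "yc (x, y, z) = y" "zc (x, y, z) = z"
  by (simp_all add: xc_def yc_def zc_def)

lemma sucP_Pair [simp]: "sucP S (x, y, z) = S x y z"
  by (simp add: sucP_def)

declare suc1234.simps [simp del] suc2143.simps [simp del]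

lemma mem_suc1234_iff:
  "(a, b, c) \<in> suc1234 x y z \<longleftrightarrow> 1 \<le> z \<and>
     (2 \<le> a \<and> a \<le> x + 1 \<and> b = y + 1 \<and> 1 \<le> c \<and> c \<le> z \<or> a = x \<and> x < b \<and> b \<le> y \<and> c = 1)"
proof (induction x y z rule: suc1234.induct)
  case (1 x y z)
  then show ?case
    by (subst suc1234.simps) auto
qed

lemma suc1234_eq_top_Un:
  "2 \<le> z \<Longrightarrow> suc1234 x y z = {(a, y + 1, z) | a. 2 \<le> a \<and> a \<le> x + 1} \<union> suc1234 x y (z - 1)"
  by (subst suc1234.simps) simp

lemma suc2143_level1: "suc2143 x y 1 = suc1234 x y 1"
  by (simp add: suc1234.simps suc2143.simps[of x y 1] suc2143.simps[of x x 0])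

lemma finite_suc1234: "finite (suc1234 x y z)"
proof (rule finite_subset)
  show "suc1234 x y z \<subseteq> insert x {2..x + 1} \<times> insert (y + 1) {x + 1..y} \<times> {1..z}"
    by (auto simp: mem_suc1234_iff)
qed simp

abbreviation walk :: "(int \<Rightarrow> int \<Rightarrow> int \<Rightarrow> pt set) \<Rightarrow> pt list \<Rightarrow> bool" where
  "walk S \<equiv> successively (\<lambda>u w. w \<in> sucP S u)"

lemma successively_iff_nth:
  "successively P xs \<longleftrightarrow> (\<forall>i. Suc i < length xs \<longrightarrow> P (xs ! i) (xs ! Suc i))"
proof (induction P xs rule: successively.induct)
  case (3 P x y xs)
  then show ?case
    by (auto simp: nth_Cons split: nat.splits)
qed auto

lemma is_path_Cons_iff:
  "is_path S (v # Q) \<longleftrightarrow> 2 \<le> xc v \<and> xc v \<le> yc v \<and> 1 \<le> zc v \<and> walk S (v # Q)"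
  by (auto simp: is_path_def successively_iff_nth)

fun sig_tail :: "(pt \<Rightarrow> pt \<Rightarrow> bool) \<Rightarrow> pt \<Rightarrow> pt list \<Rightarrow> int list" where
  "sig_tail R v [] = []"
| "sig_tail R v (w # Q) = (if R v w then [xc w] else []) @ sig_tail R w Q"

lemma signature_Cons: "signature R (v # Q) = xc v # sig_tail R v Q"
proof -
  have "map (\<lambda>(u, w). xc w) (filter (\<lambda>(u, w). R u w) (zip (v # Q) Q)) = sig_tail R v Q" for v
    by (induction Q arbitrary: v) auto
  then show ?thesis
    by (simp add: signature_def)
qed

definition continuations ::
    "(int \<Rightarrow> int \<Rightarrow> int \<Rightarrow> pt set) \<Rightarrow> (pt \<Rightarrow> pt \<Rightarrow> bool) \<Rightarrow> pt \<Rightarrow> int list \<Rightarrow> nat \<Rightarrow> pt list set" where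
  "continuations S R v r N = {Q. walk S (v # Q) \<and> sig_tail R v Q = r \<and> length Q = N}"

lemma finite_walks:
  assumes "\<And>x y z. finite (S x y z)"
  shows "finite {Q. walk S (v # Q) \<and> length Q = N}"
proof (induction N arbitrary: v)
  case 0
  then show ?case
    by simp
next
  case (Suc N)
  have "{Q. walk S (v # Q) \<and> length Q = Suc N}
        \<subseteq> (\<Union>w \<in> sucP S v. Cons w ` {Q. walk S (w # Q) \<and> length Q = N})"
    by (auto simp: length_Suc_conv)
  moreover have "finite (sucP S v)"
    using assms by (simp add: sucP_def)
  ultimately show ?case
    using Suc.IH by (meson finite_UN_I finite_imageI finite_subset)
qed

lemma finite_continuations:
  "(\<And>x y z. finite (S x y z)) \<Longrightarrow> finite (continuations S R v r N)"
  unfolding continuations_def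
  by (rule finite_subset[OF _ finite_walks[where N = N]]) auto

lemma paths_of_length_eq:
  assumes "2 \<le> g" "0 \<le> k" "1 \<le> q"
  shows "{P \<in> paths_kqg S R k q (g # r). length P = Suc N}
         = Cons (g, g + k, q) ` continuations S R (g, g + k, q) r N"
  using assms
  by (auto simp: paths_kqg_def continuations_def is_path_Cons_iff signature_Cons
      length_Suc_conv neq_Nil_conv)

lemma fps_nth_Fgen:
  assumes "2 \<le> g" "0 \<le> k" "1 \<le> q"
  shows "fps_nth (Fgen S R k q (g # r)) n
         = of_nat (card (continuations S R (g, g + k, q) r (n + length r)))"
  using assms
  by (simp add: Fgen_def paths_of_length_eq card_image)

lemma zc_suc1234_level1: "w \<in> sucP suc1234 v \<Longrightarrow> zc v = 1 \<Longrightarrow> zc w = 1"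
  by (cases v; cases w) (auto simp: mem_suc1234_iff)

lemma walk_level1_iff: "zc v = 1 \<Longrightarrow> walk suc1234 (v # Q) \<longleftrightarrow> walk suc2143 (v # Q)"
proof (induction Q arbitrary: v)
  case (Cons w Q)
  have "sucP suc2143 v = sucP suc1234 v"
    using Cons.prems by (cases v) (simp add: suc2143_level1)
  moreover have "w \<in> sucP suc1234 v \<Longrightarrow> walk suc1234 (w # Q) \<longleftrightarrow> walk suc2143 (w # Q)"
    using Cons zc_suc1234_level1 by blast
  ultimately show ?case
    by auto
qed simp

lemma sig_tail_level1:
  "zc v = 1 \<Longrightarrow> walk suc1234 (v # Q) \<Longrightarrow> sig_tail rec1234 v Q = sig_tail rec2143 v Q"
proof (induction Q arbitrary: v)
  case (Cons w Q)
  have "w \<in> sucP suc1234 v"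
    using Cons.prems(2) by simp
  then have "zc w = 1"
    using Cons.prems(1) by (rule zc_suc1234_level1)
  then show ?case
    using Cons by (simp add: rec1234_def rec2143_def)
qed simp

lemma continuations_level1:
  "continuations suc1234 rec1234 (x, y, 1) r N = continuations suc2143 rec2143 (x, y, 1) r N"
  using walk_level1_iff[of "(x, y, 1)"] sig_tail_level1[of "(x, y, 1)"]
  by (auto simp: continuations_def)

lemma s_ser_power_Suc: "s_ser ^ Suc k = s_ser ^ k + fps_X * s_ser ^ Suc k"
proof -
  have "(1 - fps_X) * s_ser = 1"
    unfolding s_ser_def by (rule inverse_mult_eq_1') simp
  then have "s_ser ^ k = (1 - fps_X) * s_ser * s_ser ^ k"
    by simp
  then show ?thesis
    by (simp add: algebra_simps)
qed

lemma fps_nth_s_ser_power_0: "fps_nth (s_ser ^ k) 0 = 1"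
  by (simp add: fps_nth_power_0 s_ser_def)

lemma fps_nth_s_ser_power_Suc_Suc:
  "fps_nth (s_ser ^ Suc k) (Suc n) = fps_nth (s_ser ^ k) (Suc n) + fps_nth (s_ser ^ Suc k) n"
  by (subst s_ser_power_Suc) simp

fun descent :: "int \<Rightarrow> int \<Rightarrow> pt list \<Rightarrow> bool" where
  "descent x y [] = True"
| "descent x y ((a, b, c) # Q) \<longleftrightarrow> a = x \<and> c = 1 \<and> x < b \<and> b \<le> y \<and> descent x b Q"

definition descents :: "int \<Rightarrow> int \<Rightarrow> nat \<Rightarrow> pt list set" where
  "descents x y n = {Q. descent x y Q \<and> length Q = n}"

lemma walk_unrecorded_iff_descent:
  "1 \<le> z \<Longrightarrow> walk suc1234 ((x, y, z) # Q) \<and> sig_tail rec1234 (x, y, z) Q = [] \<longleftrightarrow> descent x y Q"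
proof (induction Q arbitrary: y z)
  case (Cons w Q)
  obtain a b c where w: "w = (a, b, c)"
    by (cases w)
  have "walk suc1234 ((x, y, z) # w # Q) \<and> sig_tail rec1234 (x, y, z) (w # Q) = []
        \<longleftrightarrow> (a, b, c) \<in> suc1234 x y z \<and> b \<noteq> y + 1 \<and> walk suc1234 (w # Q) \<and> sig_tail rec1234 w Q = []"
    by (simp add: w rec1234_def)
  also have "\<dots> \<longleftrightarrow> a = x \<and> c = 1 \<and> x < b \<and> b \<le> y \<and> walk suc1234 (w # Q) \<and> sig_tail rec1234 w Q = []"
    using Cons.prems by (auto simp: mem_suc1234_iff)
  also have "\<dots> \<longleftrightarrow> descent x y (w # Q)"
    using Cons.IH[of 1 b] by (auto simp: w)
  finally show ?case .
qed simp

lemma continuations_Nil: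
  assumes "1 \<le> z"
  shows "continuations suc1234 rec1234 (x, y, z) [] n = descents x y n"
  unfolding continuations_def descents_def
  using walk_unrecorded_iff_descent[OF assms] by blast

lemma finite_descents: "finite (descents x y n)"
proof -
  have "finite (continuations suc1234 rec1234 (x, y, 1) [] n)"
    by (rule finite_continuations[OF finite_suc1234])
  then show ?thesis
    by (simp add: continuations_Nil)
qed

lemma descent_mono: "descent x y' Q \<Longrightarrow> y' \<le> y \<Longrightarrow> descent x y Q"
  by (cases Q) auto

lemma descents_Suc_empty: "y \<le> x \<Longrightarrow> descents x y (Suc n) = {}"
  by (auto simp: descents_def length_Suc_conv)

lemma descents_Suc:
  assumes "x < y"
  shows "descents x y (Suc n) = Cons (x, y, 1) ` descents x y n \<union> descents x (y - 1) (Suc n)"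
proof (intro equalityI subsetI)
  fix Q
  assume "Q \<in> descents x y (Suc n)"
  then obtain b Q' where "Q = (x, b, 1) # Q'" "x < b" "b \<le> y" "descent x b Q'" "length Q' = n"
    by (auto simp: descents_def length_Suc_conv)
  then show "Q \<in> Cons (x, y, 1) ` descents x y n \<union> descents x (y - 1) (Suc n)"
    by (cases "b = y") (auto simp: descents_def)
next
  fix Q
  assume "Q \<in> Cons (x, y, 1) ` descents x y n \<union> descents x (y - 1) (Suc n)"
  then show "Q \<in> descents x y (Suc n)"
    using assms descent_mono[of x "y - 1" Q y] by (auto simp: descents_def)
qed

lemma card_descents: "of_nat (card (descents x (x + int k) n)) = fps_nth (s_ser ^ k) n"
proof (induction n arbitrary: k)
  case 0
  have "descents x y 0 = {[]}" for y
    by (auto simp: descents_def)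
  then show ?case
    by (simp add: fps_nth_s_ser_power_0)
next
  case (Suc n)
  note IH_length = Suc.IH
  show ?case
  proof (induction k)
    case 0
    then show ?case
      by (simp add: descents_Suc_empty)
  next
    case (Suc k)
    let ?y = "x + int (Suc k)"
    have "Cons (x, ?y, 1) ` descents x ?y n \<inter> descents x (?y - 1) (Suc n) = {}"
      by (auto simp: descents_def)
    then have "of_nat (card (descents x ?y (Suc n)))
               = of_nat (card (descents x (x + int k) (Suc n))) + of_nat (card (descents x ?y n))"
      by (simp add: descents_Suc card_Un_disjoint finite_descents card_image add.commute)
    also have "\<dots> = fps_nth (s_ser ^ k) (Suc n) + fps_nth (s_ser ^ Suc k) n"
      using Suc.IH IH_length[of "Suc k"] by simp
    finally show ?case
      by (simp only: fps_nth_s_ser_power_Suc_Suc)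
  qed
qed

lemma sig_tail_rec1234_cong: "yc v = yc v' \<Longrightarrow> sig_tail rec1234 v Q = sig_tail rec1234 v' Q"
  by (cases Q) (auto simp: rec1234_def)

lemma continuations_split:
  assumes "2 \<le> z" "2 \<le> a" "a \<le> x + 1"
  shows "continuations suc1234 rec1234 (x, y, z) (a # r) (Suc N)
         = continuations suc1234 rec1234 (x, y, z - 1) (a # r) (Suc N)
           \<union> Cons (a, y + 1, z) ` continuations suc1234 rec1234 (a, y + 1, z) r N"
    (is "?C = ?C' \<union> ?T")
proof (intro equalityI subsetI)
  fix Q
  assume "Q \<in> ?C"
  then obtain w Q' where Q: "Q = w # Q'" and w: "w \<in> suc1234 x y z"
    and walk: "walk suc1234 (w # Q')" and sig: "sig_tail rec1234 (x, y, z) (w # Q') = a # r"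
    and len: "length Q' = N"
    by (auto simp: continuations_def length_Suc_conv)
  show "Q \<in> ?C' \<union> ?T"
  proof (cases "w \<in> suc1234 x y (z - 1)")
    case True
    have "sig_tail rec1234 (x, y, z - 1) (w # Q') = a # r"
      using sig sig_tail_rec1234_cong[of "(x, y, z)" "(x, y, z - 1)" "w # Q'"] by simp
    then show ?thesis
      using True Q walk len unfolding continuations_def by auto
  next
    case False
    then obtain a' where "w = (a', y + 1, z)"
      using w suc1234_eq_top_Un[OF assms(1)] by auto
    then show ?thesis
      using Q walk sig len by (auto simp: continuations_def rec1234_def)
  qed
next
  fix Q
  assume "Q \<in> ?C' \<union> ?T"
  then show "Q \<in> ?C"
    using assms sig_tail_rec1234_cong[of "(x, y, z)" "(x, y, z - 1)"]
    by (auto simp: continuations_def rec1234_def suc1234_eq_top_Un[OF assms(1)] length_Suc_conv)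
qed

lemma card_continuations_split:
  assumes "2 \<le> z" "2 \<le> a" "a \<le> x + 1"
  shows "card (continuations suc1234 rec1234 (x, y, z) (a # r) (Suc N))
         = card (continuations suc1234 rec1234 (x, y, z - 1) (a # r) (Suc N))
           + card (continuations suc1234 rec1234 (a, y + 1, z) r N)"
proof -
  have "zc (hd Q) \<le> z - 1" if "Q \<in> continuations suc1234 rec1234 (x, y, z - 1) (a # r) (Suc N)" for Q
    using that by (cases Q) (auto simp: continuations_def mem_suc1234_iff)
  then have "continuations suc1234 rec1234 (x, y, z - 1) (a # r) (Suc N)
             \<inter> Cons (a, y + 1, z) ` continuations suc1234 rec1234 (a, y + 1, z) r N = {}"
    by fastforce
  then show ?thesis
    by (simp add: continuations_split[OF assms] card_Un_disjoint finite_continuations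
        finite_suc1234 card_image)
qed

theorem lemma3p5:
  fixes k q :: int and \<gamma> :: "int list"
  assumes "k \<ge> 0" and "q \<ge> 1" and "length \<gamma> \<ge> 1"
    and "\<gamma> ! 0 \<ge> 2"
    and "\<forall>i. Suc i < length \<gamma> \<longrightarrow> 2 \<le> \<gamma> ! Suc i \<and> \<gamma> ! Suc i \<le> \<gamma> ! i + 1"
  shows "(length \<gamma> = 1 \<longrightarrow> F1234 k q \<gamma> = s_ser ^ nat k)
       \<and> (q = 1 \<longrightarrow> F1234 k q \<gamma> = F2143 k q \<gamma>)
       \<and> (length \<gamma> \<ge> 2 \<and> q \<ge> 2 \<longrightarrow>
            F1234 k q \<gamma> = F1234 k (q - 1) \<gamma> + F1234 (\<gamma> ! 0 + 1 - \<gamma> ! 1 + k) q (tl \<gamma>))"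
proof -
  obtain g r where \<gamma>: "\<gamma> = g # r"
    using assms(3) by (cases \<gamma>) auto
  have g: "2 \<le> g"
    using assms(4) by (simp add: \<gamma>)
  note nth_Fgen = fps_nth_Fgen[OF g assms(1)]
  show ?thesis
  proof (intro conjI impI)
    assume "length \<gamma> = 1"
    then show "F1234 k q \<gamma> = s_ser ^ nat k"
      using card_descents[of g "nat k"] assms(1,2)
      by (simp add: fps_eq_iff F1234_def \<gamma> nth_Fgen continuations_Nil)
  next
    assume "q = 1"
    then show "F1234 k q \<gamma> = F2143 k q \<gamma>"
      by (simp add: fps_eq_iff F1234_def F2143_def \<gamma> nth_Fgen continuations_level1)
  next
    assume "length \<gamma> \<ge> 2 \<and> q \<ge> 2"
    then obtain a r' where r: "r = a # r'" and q: "q \<ge> 2"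
      by (cases r) (auto simp: \<gamma>)
    have a: "2 \<le> a" "a \<le> g + 1"
      using assms(5)[rule_format, of 0] by (simp_all add: \<gamma> r)
    have "0 \<le> g + 1 - a + k"
      using a assms(1) by simp
    then show "F1234 k q \<gamma> = F1234 k (q - 1) \<gamma> + F1234 (\<gamma> ! 0 + 1 - \<gamma> ! 1 + k) q (tl \<gamma>)"
      using q card_continuations_split[OF q a, where y = "g + k" and r = r']
      by (simp add: fps_eq_iff F1234_def \<gamma> r nth_Fgen fps_nth_Fgen[OF a(1)] ac_simps)
  qed
qed

end
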